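(* Let $p$ be a probability distribution on the (finite) set of trajectories. Suppose there exists a policy $\pi^\circ \in \Pi$ whose trajectory distribution satisfies $$\pi^\circ(\tau) = \frac{\sqrt{p(\tau)}}{\sum_{\tau'} \sqrt{p(\tau')}} \quad \text{for all trajectories } \tau.$$ Then there exists a (time-indexed) reward function $r = (r_t)_{t=1}^T$, $r_t : \mathcal{S}\times\mathcal{A} \to [-\infty,\infty)$, such that the meta-POMDP and the MaxEnt RL problem for $r$ have the same solutions: $$\arg\min_{\pi \in \Pi} \mathrm{Regret}_p(\pi) = \arg\max_{\pi\in\Pi} J(\pi, r).$$
   Context: Finite-horizon MDP: finite state set $\mathcal{S}$, finite action set $\mathcal{A}$, horizon $T\ge 1$, initial distribution $p_1$ on $\mathcal{S}$, transition kernel $p(s'\mid s,a)$. A trajectory is $\tau=(s_1,a_1,\dots,s_T,a_T)$. A policy is a Markov (possibly time-dependent) policy $\pi=(\pi_t(\cdot\mid s))_{t=1}^T$, each $\pi_t(\cdot\mid s)$ a probability distribution on $\mathcal{A}$; we write $\pi(a_t\mid s_t)$ for $\pi_t(a_t\mid s_t)$, and $\Pi$ denotes the set of all such policies. The trajectory distribution of $\pi$ is $\pi(\tau)=p_1(s_1)\prod_{t=1}^{T}\pi(a_t\mid s_t)\prod_{t=1}^{T-1}p(s_{t+1}\mid s_t,a_t)$, and $\mathbb{E}_\pi$ denotes expectation over $\tau\sim\pi(\tau)$. For a (possibly time-indexed) reward $r_t(s,a)$ (values in $[-\infty,\infty)$ allowed), the MaxEnt RL objective is $J(\pi,r)=\mathbb{E}_\pi\big[\sum_{t=1}^T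 r_t(s_t,a_t)\big]+\mathcal{H}_\pi[a\mid s]$, where $\mathcal{H}_\pi[a\mid s]=\mathbb{E}_\pi\big[-\sum_{t=1}^T\log\pi(a_t\mid s_t)\big]$ (with $0\log 0=0$); the MaxEnt RL problem is to maximize $J(\cdot,r)$ over $\Pi$. Meta-POMDP: given a target distribution $p$ over trajectories (a belief over an unobserved target trajectory $\tau^*$), the agent repeatedly runs episodes with the same policy until it produces $\tau^*$; its regret is the expected number of episodes, $\mathrm{Regret}_p(\pi)=\sum_{\tau:\,p(\tau)>0} \frac{p(\tau)}{\pi(\tau)}$, with the convention $p(\tau)/0=+\infty$. Solving the meta-POMDP means minimizing $\mathrm{Regret}_p$ over $\Pi$. *)

theory Defs
  imports Complex_Main "HOL-Library.Extended_Real"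
begin

(* Time steps t = 1..T of the paper are indexed 0..T-1 here.
   A trajectory (s_1,a_1,...,s_T,a_T) is a list of length T of state-action pairs,
   tau ! t = (s_{t+1}, a_{t+1}). *)

definition trajs :: "nat \<Rightarrow> ('s \<times> 'a) list set" where
  "trajs T = {tau. length tau = T}"

(* Markov, time-dependent policies: pol t s a = pi_{t+1}(a | s) *)
definition policies :: "nat \<Rightarrow> (nat \<Rightarrow> 's \<Rightarrow> 'a::finite \<Rightarrow> real) set" where
  "policies T = {pol. \<forall>t<T. \<forall>s. (\<forall>a. 0 \<le> pol t s a) \<and> (\<Sum>a\<in>UNIV. pol t s a) = 1}"

definition traj_prob ::
  "nat \<Rightarrow> ('s \<Rightarrow> real) \<Rightarrow> ('s \<Rightarrow> 'a \<Rightarrow> 's \<Rightarrow> real) \<Rightarrow> (nat \<Rightarrow> 's \<Rightarrow> 'a \<Rightarrow> real)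
    \<Rightarrow> ('s \<times> 'a) list \<Rightarrow> real" where
  "traj_prob T p1 P pol tau =
     p1 (fst (tau ! 0))
     * (\<Prod>t<T. pol t (fst (tau ! t)) (snd (tau ! t)))
     * (\<Prod>t<T - 1. P (fst (tau ! t)) (snd (tau ! t)) (fst (tau ! Suc t)))"

definition regret ::
  "nat \<Rightarrow> ('s \<Rightarrow> real) \<Rightarrow> ('s \<Rightarrow> 'a \<Rightarrow> 's \<Rightarrow> real) \<Rightarrow> (('s \<times> 'a) list \<Rightarrow> real)
    \<Rightarrow> (nat \<Rightarrow> 's \<Rightarrow> 'a \<Rightarrow> real) \<Rightarrow> ereal" where
  "regret T p1 P p pol =
     (\<Sum>tau\<in>{tau\<in>trajs T. 0 < p tau}.
        (if traj_prob T p1 P pol tau = 0 then \<infinity>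
         else ereal (p tau / traj_prob T p1 P pol tau)))"

(* conditional entropy H_pi[a|s] = E_pi[- sum_t log pol(a_t|s_t)]; terms with pol(tau)=0 vanish *)
definition cond_entropy ::
  "nat \<Rightarrow> ('s \<Rightarrow> real) \<Rightarrow> ('s \<Rightarrow> 'a \<Rightarrow> 's \<Rightarrow> real) \<Rightarrow> (nat \<Rightarrow> 's \<Rightarrow> 'a \<Rightarrow> real) \<Rightarrow> real" where
  "cond_entropy T p1 P pol =
     (\<Sum>tau\<in>trajs T. traj_prob T p1 P pol tau *
        (- (\<Sum>t<T. ln (pol t (fst (tau ! t)) (snd (tau ! t))))))"

definition maxent_obj ::
  "nat \<Rightarrow> ('s \<Rightarrow> real) \<Rightarrow> ('s \<Rightarrow> 'a \<Rightarrow> 's \<Rightarrow> real) \<Rightarrow> (nat \<Rightarrow> 's \<Rightarrow> 'a \<Rightarrow> real)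
    \<Rightarrow> (nat \<Rightarrow> 's \<Rightarrow> 'a \<Rightarrow> ereal) \<Rightarrow> ereal" where
  "maxent_obj T p1 P pol r =
     (\<Sum>tau\<in>trajs T. ereal (traj_prob T p1 P pol tau) *
        (\<Sum>t<T. r t (fst (tau ! t)) (snd (tau ! t))))
     + ereal (cond_entropy T p1 P pol)"

end

theory Submission
  imports Defs
begin

text \<open>
  Both objectives depend on a policy only through its trajectory distribution \<open>q\<close>.
  Completing the square gives \<open>Regret\<^sub>p(q) = \<Sum> p/q \<ge> (\<Sum> \<surd>p)\<^sup>2\<close>, with equality
  exactly when \<open>q = \<surd>p / \<Sum> \<surd>p\<close>, i.e. when \<open>q\<close> is the trajectory distribution of \<open>\<pi>\<degree>\<close>.
  For the reward \<open>r\<^sub>t = log \<pi>\<degree>\<^sub>t\<close> (\<open>-\<infinity>\<close> where \<open>\<pi>\<degree>\<^sub>t\<close> vanishes) the initial-state and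
  transition factors cancel, so \<open>J(\<pi>, r)\<close> is minus the relative entropy of \<open>q\<close> with respect to
  the trajectory distribution of \<open>\<pi>\<degree>\<close>; by Gibbs' inequality it is \<open>\<le> 0\<close>, with equality under
  the same condition.
\<close>

lemma sum_ereal_eq_MInfty:
  fixes f :: "'x \<Rightarrow> ereal"
  assumes "finite A" "a \<in> A" "f a = -\<infinity>" "\<forall>x\<in>A. f x \<noteq> \<infinity>"
  shows "sum f A = -\<infinity>"
proof -
  have "sum f (A - {a}) \<noteq> \<infinity>"
    using assms by (subst sum_Pinfty) auto
  moreover have "sum f A = f a + sum f (A - {a})"
    using assms by (simp add: sum.remove)
  ultimately show ?thesis
    using assms by simp
qed

definition neg_rel_entropy :: "'x set \<Rightarrow> ('x \<Rightarrow> real) \<Rightarrow> ('x \<Rightarrow> real) \<Rightarrow> ereal" where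
  "neg_rel_entropy A q c =
     (\<Sum>x\<in>A. if q x = 0 then 0 else if c x = 0 then -\<infinity> else ereal (q x * ln (c x / q x)))"

lemma ln_ratio_term_le_diff:
  fixes q c :: real
  assumes "0 \<le> q" "0 \<le> c" "q \<noteq> 0 \<Longrightarrow> c \<noteq> 0"
  shows "(if q = 0 then 0 else q * ln (c / q)) \<le> c - q"
proof (cases "q = 0")
  case False
  then have "0 < q" "0 < c"
    using assms by auto
  then have "q * ln (c / q) \<le> q * (c / q - 1)"
    using ln_le_minus_one[of "c / q"] by (simp add: mult_left_mono)
  also have "\<dots> = c - q"
    using \<open>0 < q\<close> by (simp add: field_simps)
  finally show ?thesis
    using False by simp
qed (use assms in simp)

lemma ln_ratio_term_eq_diff_iff:
  fixes q c :: real
  assumes "0 \<le> q" "0 \<le> c" "q \<noteq> 0 \<Longrightarrow> c \<noteq> 0"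
  shows "(if q = 0 then 0 else q * ln (c / q)) = c - q \<longleftrightarrow> q = c"
proof (cases "q = 0")
  case False
  then have "0 < q" "0 < c"
    using assms by auto
  have "q * ln (c / q) = c - q \<longleftrightarrow> ln (c / q) = c / q - 1"
    using \<open>0 < q\<close> by (auto simp: field_simps)
  also have "\<dots> \<longleftrightarrow> c / q = 1"
    using \<open>0 < q\<close> \<open>0 < c\<close> ln_eq_minus_one[of "c / q"] by auto
  finally show ?thesis
    using False by auto
qed auto

lemma neg_rel_entropy_eq_ereal:
  assumes "\<And>x. x \<in> A \<Longrightarrow> q x \<noteq> 0 \<Longrightarrow> c x \<noteq> 0"
  shows "neg_rel_entropy A q c = ereal (\<Sum>x\<in>A. if q x = 0 then 0 else q x * ln (c x / q x))"
  unfolding neg_rel_entropy_def sum_ereal[symmetric]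
  by (rule sum.cong) (use assms in auto)

lemma neg_rel_entropy_eq_MInfty:
  assumes "finite A" "x \<in> A" "q x \<noteq> 0" "c x = 0"
  shows "neg_rel_entropy A q c = -\<infinity>"
  unfolding neg_rel_entropy_def by (rule sum_ereal_eq_MInfty[OF assms(1,2)]) (use assms in auto)

lemma neg_rel_entropy_le_0:
  assumes "finite A" "\<forall>x\<in>A. 0 \<le> q x" "\<forall>x\<in>A. 0 \<le> c x" "sum q A = 1" "sum c A = 1"
  shows "neg_rel_entropy A q c \<le> 0"
proof (cases "\<exists>x\<in>A. q x \<noteq> 0 \<and> c x = 0")
  case True
  then show ?thesis
    using neg_rel_entropy_eq_MInfty[OF assms(1)] by force
next
  case False
  have "(\<Sum>x\<in>A. if q x = 0 then 0 else q x * ln (c x / q x)) \<le> (\<Sum>x\<in>A. c x - q x)"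
  proof (rule sum_mono)
    fix x assume "x \<in> A"
    then show "(if q x = 0 then 0 else q x * ln (c x / q x)) \<le> c x - q x"
      using assms False by (intro ln_ratio_term_le_diff) auto
  qed
  also have "\<dots> = 0"
    using assms by (simp add: sum_subtractf)
  finally show ?thesis
    using False by (subst neg_rel_entropy_eq_ereal) auto
qed

lemma neg_rel_entropy_eq_0_iff:
  assumes "finite A" "\<forall>x\<in>A. 0 \<le> q x" "\<forall>x\<in>A. 0 \<le> c x" "sum q A = 1" "sum c A = 1"
  shows "neg_rel_entropy A q c = 0 \<longleftrightarrow> (\<forall>x\<in>A. q x = c x)"
proof
  assume eq: "\<forall>x\<in>A. q x = c x"
  have term0: "(if q x = 0 then 0 else if c x = 0 then -\<infinity> else ereal (q x * ln (c x / q x))) = 0"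
    if "x \<in> A" for x
  proof -
    have "q x = c x"
      using eq that by blast
    then show ?thesis
      by (cases "c x = 0") simp_all
  qed
  show "neg_rel_entropy A q c = 0"
    unfolding neg_rel_entropy_def by (intro sum.neutral ballI term0)
next
  assume zero: "neg_rel_entropy A q c = 0"
  then have supp: "\<forall>x\<in>A. q x \<noteq> 0 \<longrightarrow> c x \<noteq> 0"
    using neg_rel_entropy_eq_MInfty[OF assms(1)] by force
  define gap where "gap x = c x - q x - (if q x = 0 then 0 else q x * ln (c x / q x))" for x
  have "(\<Sum>x\<in>A. if q x = 0 then 0 else q x * ln (c x / q x)) = 0"
    using zero supp by (subst (asm) neg_rel_entropy_eq_ereal) auto
  then have "sum gap A = 0"
    using assms(4,5) by (simp add: gap_def sum_subtractf)
  moreover have "0 \<le> gap x" if "x \<in> A" for x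
    using ln_ratio_term_le_diff[of "q x" "c x"] assms(2,3) supp that by (simp add: gap_def)
  ultimately have gap0: "gap x = 0" if "x \<in> A" for x
    using sum_nonneg_eq_0_iff[OF assms(1)] that by blast
  show "\<forall>x\<in>A. q x = c x"
  proof
    fix x assume x: "x \<in> A"
    have "(if q x = 0 then 0 else q x * ln (c x / q x)) = c x - q x"
      using gap0[OF x] by (simp add: gap_def)
    then show "q x = c x"
      using ln_ratio_term_eq_diff_iff[of "q x" "c x"] assms(2,3) supp x by blast
  qed
qed

definition support_ratio_sum :: "'x set \<Rightarrow> ('x \<Rightarrow> real) \<Rightarrow> ('x \<Rightarrow> real) \<Rightarrow> ereal" where
  "support_ratio_sum A p q = (\<Sum>x\<in>{x\<in>A. 0 < p x}. if q x = 0 then \<infinity> else ereal (p x / q x))"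

lemma support_ratio_sum_eq_PInfty:
  assumes "finite A" "x \<in> A" "0 < p x" "q x = 0"
  shows "support_ratio_sum A p q = \<infinity>"
  unfolding support_ratio_sum_def using assms by (subst sum_Pinfty) auto

lemma support_ratio_sum_eq_ereal:
  assumes "\<And>x. x \<in> A \<Longrightarrow> 0 < p x \<Longrightarrow> q x \<noteq> 0"
  shows "support_ratio_sum A p q = ereal (\<Sum>x\<in>{x\<in>A. 0 < p x}. p x / q x)"
  unfolding support_ratio_sum_def sum_ereal[symmetric] by (rule sum.cong) (use assms in auto)

lemma sum_ratio_eq_sum_sq_dev:
  fixes p q :: "'x \<Rightarrow> real"
  assumes "\<forall>x\<in>B. 0 < q x" "\<forall>x\<in>B. 0 \<le> p x" "S = (\<Sum>x\<in>B. sqrt (p x))"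
  shows "(\<Sum>x\<in>B. p x / q x) = (\<Sum>x\<in>B. (sqrt (p x) - S * q x)\<^sup>2 / q x) + S\<^sup>2 * (2 - sum q B)"
proof -
  have "p x / q x = (sqrt (p x) - S * q x)\<^sup>2 / q x + 2 * S * sqrt (p x) - S\<^sup>2 * q x" if "x \<in> B" for x
  proof -
    have "0 < q x" "(sqrt (p x))\<^sup>2 = p x"
      using assms(1,2) that by simp_all
    then show ?thesis
      by (simp add: field_simps power2_eq_square)
  qed
  then have "(\<Sum>x\<in>B. p x / q x)
      = (\<Sum>x\<in>B. (sqrt (p x) - S * q x)\<^sup>2 / q x) + 2 * S * S - S\<^sup>2 * sum q B"
    by (simp add: sum.distrib sum_subtractf sum_distrib_left[symmetric] assms(3))
  then show ?thesis
    by (simp add: algebra_simps power2_eq_square)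
qed

lemma sum_ratio_ge_sqrt_sum_sq:
  fixes p q :: "'x \<Rightarrow> real"
  assumes "\<forall>x\<in>B. 0 < q x" "\<forall>x\<in>B. 0 \<le> p x" "sum q B \<le> 1"
  shows "(\<Sum>x\<in>B. sqrt (p x))\<^sup>2 \<le> (\<Sum>x\<in>B. p x / q x)"
proof -
  define S where "S = (\<Sum>x\<in>B. sqrt (p x))"
  have "S\<^sup>2 * 1 \<le> S\<^sup>2 * (2 - sum q B)"
    using assms(3) by (intro mult_left_mono) auto
  moreover have "0 \<le> (\<Sum>x\<in>B. (sqrt (p x) - S * q x)\<^sup>2 / q x)"
    using assms(1) by (intro sum_nonneg divide_nonneg_pos) auto
  ultimately show ?thesis
    using sum_ratio_eq_sum_sq_dev[OF assms(1,2) S_def] by (simp add: S_def)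
qed

lemma sum_ratio_eq_sqrt_sum_sq_imp:
  fixes p q :: "'x \<Rightarrow> real"
  assumes "finite B" "\<forall>x\<in>B. 0 < q x" "\<forall>x\<in>B. 0 \<le> p x" "sum q B \<le> 1"
    and "0 < S" "S = (\<Sum>x\<in>B. sqrt (p x))" "(\<Sum>x\<in>B. p x / q x) = S\<^sup>2"
  shows "sum q B = 1" "\<forall>x\<in>B. q x = sqrt (p x) / S"
proof -
  define dev where "dev x = (sqrt (p x) - S * q x)\<^sup>2 / q x" for x
  have dev_nonneg: "\<And>x. x \<in> B \<Longrightarrow> 0 \<le> dev x"
    unfolding dev_def using assms(2) by (intro divide_nonneg_pos) auto
  have "S\<^sup>2 * 1 \<le> S\<^sup>2 * (2 - sum q B)"
    using assms(4) by (intro mult_left_mono) auto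
  moreover have "0 \<le> sum dev B"
    using dev_nonneg by (intro sum_nonneg) auto
  moreover have "S\<^sup>2 = sum dev B + S\<^sup>2 * (2 - sum q B)"
    using sum_ratio_eq_sum_sq_dev[OF assms(2,3,6)] assms(7) by (simp add: dev_def)
  ultimately have dev0: "sum dev B = 0" and "S\<^sup>2 * (2 - sum q B) = S\<^sup>2 * 1"
    by linarith+
  then show "sum q B = 1"
    using assms(5) by simp
  show "\<forall>x\<in>B. q x = sqrt (p x) / S"
  proof
    fix x assume "x \<in> B"
    then have "dev x = 0"
      using sum_nonneg_eq_0_iff[of B dev, OF assms(1) dev_nonneg] dev0 by blast
    then have "sqrt (p x) = S * q x"
      using assms(2) \<open>x \<in> B\<close> by (force simp: dev_def)
    then show "q x = sqrt (p x) / S"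
      using assms(5) by (simp add: field_simps)
  qed
qed

lemma sum_sqrt_support:
  assumes "finite A" "\<forall>x\<in>A. 0 \<le> p x"
  shows "(\<Sum>x\<in>{x\<in>A. 0 < p x}. sqrt (p x)) = (\<Sum>x\<in>A. sqrt (p x))"
  by (rule sum.mono_neutral_left) (use assms in \<open>auto simp: le_less\<close>)

lemma support_ratio_sum_finite_imp_pos:
  assumes "finite A" "\<forall>x\<in>A. 0 \<le> q x" "support_ratio_sum A p q \<noteq> \<infinity>"
  shows "\<forall>x\<in>{x\<in>A. 0 < p x}. 0 < q x"
  using assms support_ratio_sum_eq_PInfty[OF assms(1)] by (force simp: order_less_le)

lemma sqrt_sum_sq_le_support_ratio_sum:
  assumes "finite A" "\<forall>x\<in>A. 0 \<le> p x" "\<forall>x\<in>A. 0 \<le> q x" "sum q A = 1"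
  shows "ereal ((\<Sum>x\<in>A. sqrt (p x))\<^sup>2) \<le> support_ratio_sum A p q"
proof (cases "support_ratio_sum A p q = \<infinity>")
  case False
  define B where "B = {x\<in>A. 0 < p x}"
  have q_pos: "\<forall>x\<in>B. 0 < q x"
    using support_ratio_sum_finite_imp_pos[OF assms(1,3) False] by (simp add: B_def)
  have "sum q B \<le> sum q A"
    using assms(1,3) by (intro sum_mono2) (auto simp: B_def)
  then have "(\<Sum>x\<in>B. sqrt (p x))\<^sup>2 \<le> (\<Sum>x\<in>B. p x / q x)"
    using assms(2,4) q_pos by (intro sum_ratio_ge_sqrt_sum_sq) (auto simp: B_def)
  then show ?thesis
    using q_pos sum_sqrt_support[OF assms(1,2)]
    by (subst support_ratio_sum_eq_ereal) (auto simp: B_def)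
qed simp

lemma support_ratio_sum_eq_sqrt_sum_sq_iff:
  assumes "finite A" "\<forall>x\<in>A. 0 \<le> p x" "\<forall>x\<in>A. 0 \<le> q x" "sum p A = 1" "sum q A = 1"
  defines "S \<equiv> \<Sum>x\<in>A. sqrt (p x)"
  shows "support_ratio_sum A p q = ereal (S\<^sup>2) \<longleftrightarrow> (\<forall>x\<in>A. q x = sqrt (p x) / S)"
proof -
  define B where "B = {x\<in>A. 0 < p x}"
  have SB: "S = (\<Sum>x\<in>B. sqrt (p x))"
    using sum_sqrt_support[OF assms(1,2)] by (simp add: S_def B_def)
  have "B \<noteq> {}"
    using assms(2,4) sum_nonneg_eq_0_iff[OF assms(1), of p] by (force simp: B_def)
  then have S_pos: "0 < S"
    unfolding SB B_def using assms(1) by (intro sum_pos) auto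
  have qB: "sum q B \<le> sum q A"
    using assms(1,3) by (intro sum_mono2) (auto simp: B_def)
  show ?thesis
  proof
    assume eq: "support_ratio_sum A p q = ereal (S\<^sup>2)"
    then have q_pos: "\<forall>x\<in>B. 0 < q x"
      using support_ratio_sum_finite_imp_pos[OF assms(1,3), of p] by (simp add: B_def)
    then have "(\<Sum>x\<in>B. p x / q x) = S\<^sup>2"
      using eq by (subst (asm) support_ratio_sum_eq_ereal) (auto simp: B_def)
    moreover have "finite B" "\<forall>x\<in>B. 0 \<le> p x" "sum q B \<le> 1"
      using assms(1,2,5) qB by (auto simp: B_def)
    ultimately have "sum q B = 1" and on_B: "\<forall>x\<in>B. q x = sqrt (p x) / S"
      using sum_ratio_eq_sqrt_sum_sq_imp[OF _ q_pos _ _ S_pos SB] by blast+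
    then have "sum q (A - B) = 0"
      using assms(1,5) sum.subset_diff[of B A q] by (auto simp: B_def)
    then have "\<forall>x\<in>A - B. q x = 0"
      using sum_nonneg_eq_0_iff[of "A - B" q] assms(1,3) by auto
    moreover have "\<forall>x\<in>A - B. p x = 0"
      using assms(2) by (force simp: B_def)
    ultimately show "\<forall>x\<in>A. q x = sqrt (p x) / S"
      using on_B by auto
  next
    assume q_eq: "\<forall>x\<in>A. q x = sqrt (p x) / S"
    have "p x / q x = S * sqrt (p x)" if "x \<in> B" for x
    proof -
      define r where "r = sqrt (p x)"
      have "0 < r" "p x = r * r" "q x = r / S"
        using q_eq that by (auto simp: B_def r_def)
      then show ?thesis
        using S_pos by (simp add: r_def[symmetric])
    qed
    then have "(\<Sum>x\<in>B. p x / q x) = S * S"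
      unfolding SB by (simp add: sum_distrib_left)
    then show "support_ratio_sum A p q = ereal (S\<^sup>2)"
      using q_eq S_pos by (subst support_ratio_sum_eq_ereal) (auto simp: B_def power2_eq_square)
  qed
qed

lemma minimizers_eq_of_attained_bound:
  fixes f :: "'x \<Rightarrow> 'b::order"
  assumes "\<forall>x\<in>X. m \<le> f x" "\<forall>x\<in>X. f x = m \<longleftrightarrow> Q x" "x0 \<in> X" "Q x0"
  shows "{x\<in>X. \<forall>y\<in>X. f x \<le> f y} = {x\<in>X. Q x}"
proof -
  have "f x = m" if "x \<in> X" "\<forall>y\<in>X. f x \<le> f y" for x
    using assms that by (metis order.antisym)
  then show ?thesis
    using assms by auto
qed

lemma maximizers_eq_of_attained_bound:
  fixes f :: "'x \<Rightarrow> 'b::order"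
  assumes "\<forall>x\<in>X. f x \<le> m" "\<forall>x\<in>X. f x = m \<longleftrightarrow> Q x" "x0 \<in> X" "Q x0"
  shows "{x\<in>X. \<forall>y\<in>X. f y \<le> f x} = {x\<in>X. Q x}"
proof -
  have "f x = m" if "x \<in> X" "\<forall>y\<in>X. f y \<le> f x" for x
    using assms that by (metis order.antisym)
  then show ?thesis
    using assms by auto
qed

lemma finite_trajs: "finite (trajs n :: ('s::finite \<times> 'a::finite) list set)"
  using finite_lists_length_eq[of "UNIV :: ('s \<times> 'a) set" n] by (simp add: trajs_def)

lemma trajs_Suc: "trajs (Suc n) = (\<lambda>(xs, x). xs @ [x]) ` (trajs n \<times> UNIV)"
proof safe
  fix ys assume "ys \<in> trajs (Suc n)"
  then have "ys = butlast ys @ [last ys]" "length (butlast ys) = n"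
    by (auto simp: trajs_def intro: append_butlast_last_id[symmetric])
  then show "ys \<in> (\<lambda>(xs, x). xs @ [x]) ` (trajs n \<times> UNIV)"
    by (intro image_eqI[of _ _ "(butlast ys, last ys)"]) (auto simp: trajs_def)
qed (auto simp: trajs_def)

lemma traj_prob_snoc:
  assumes "length xs = Suc n"
  shows "traj_prob (Suc (Suc n)) p1 P pol (xs @ [x]) =
    traj_prob (Suc n) p1 P pol xs * (P (fst (xs ! n)) (snd (xs ! n)) (fst x) * pol (Suc n) (fst x) (snd x))"
  using assms unfolding traj_prob_def
  by (simp add: prod.lessThan_Suc nth_append mult_ac del: prod.lessThan_Suc_shift)

lemma sum_UNIV_weighted_policy_row:
  fixes \<mu> :: "'s::finite \<Rightarrow> real" and pol :: "nat \<Rightarrow> 's \<Rightarrow> 'a::finite \<Rightarrow> real"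
  assumes "sum \<mu> UNIV = 1" "pol \<in> policies T" "t < T"
  shows "(\<Sum>x\<in>UNIV. \<mu> (fst x) * pol t (fst x) (snd x)) = 1"
proof -
  have "(\<Sum>x\<in>UNIV. \<mu> (fst x) * pol t (fst x) (snd x)) = (\<Sum>s\<in>UNIV. \<mu> s * (\<Sum>a\<in>UNIV. pol t s a))"
    unfolding sum_distrib_left sum.cartesian_product UNIV_Times_UNIV by (simp add: case_prod_beta)
  also have "\<dots> = 1"
    using assms by (simp add: policies_def)
  finally show ?thesis .
qed

lemma sum_traj_prob:
  fixes p1 :: "'s::finite \<Rightarrow> real" and P :: "'s \<Rightarrow> 'a::finite \<Rightarrow> 's \<Rightarrow> real"
  assumes "0 < T" "sum p1 UNIV = 1" "\<forall>s a. sum (P s a) UNIV = 1" "pol \<in> policies T"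
  shows "(\<Sum>tau\<in>trajs T. traj_prob T p1 P pol tau) = 1"
  using assms(1,4)
proof (induction T rule: nat_induct_non_zero)
  case 1
  have "trajs 1 = (\<lambda>x. [x]) ` (UNIV :: ('s \<times> 'a) set)"
    by (auto simp: trajs_def length_Suc_conv)
  then have "(\<Sum>tau\<in>trajs 1. traj_prob 1 p1 P pol tau) = (\<Sum>x\<in>UNIV. p1 (fst x) * pol 0 (fst x) (snd x))"
    by (simp add: sum.reindex inj_on_def traj_prob_def)
  then show ?case
    using sum_UNIV_weighted_policy_row[OF assms(2) 1] by simp
next
  case (Suc n)
  then obtain m where n: "n = Suc m"
    using not0_implies_Suc by blast
  have IH: "(\<Sum>xs\<in>trajs n. traj_prob n p1 P pol xs) = 1"
    using Suc by (simp add: policies_def)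
  have "(\<Sum>tau\<in>trajs (Suc n). traj_prob (Suc n) p1 P pol tau)
      = (\<Sum>xs\<in>trajs n. \<Sum>x\<in>UNIV. traj_prob (Suc n) p1 P pol (xs @ [x]))"
    unfolding trajs_Suc sum.cartesian_product
    by (subst sum.reindex) (auto simp: inj_on_def case_prod_unfold)
  also have "\<dots> = (\<Sum>xs\<in>trajs n. traj_prob n p1 P pol xs *
      (\<Sum>x\<in>UNIV. P (fst (xs ! m)) (snd (xs ! m)) (fst x) * pol n (fst x) (snd x)))"
    unfolding n by (intro sum.cong refl) (simp add: traj_prob_snoc trajs_def sum_distrib_left)
  also have "\<dots> = 1"
    using sum_UNIV_weighted_policy_row[OF _ Suc.prems] assms(3) IH by simp
  finally show ?case .
qed

lemma traj_prob_nonneg: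
  assumes "\<forall>s. 0 \<le> p1 s" "\<forall>s a s'. 0 \<le> P s a s'" "pol \<in> policies T"
  shows "0 \<le> traj_prob T p1 P pol tau"
  using assms unfolding traj_prob_def policies_def by (intro mult_nonneg_nonneg prod_nonneg) auto

definition log_reward :: "(nat \<Rightarrow> 's \<Rightarrow> 'a \<Rightarrow> real) \<Rightarrow> nat \<Rightarrow> 's \<Rightarrow> 'a \<Rightarrow> ereal" where
  "log_reward pol t s a = (if 0 < pol t s a then ereal (ln (pol t s a)) else -\<infinity>)"

lemma traj_prob_eq_mult_prod_policy:
  "traj_prob T p1 P pol tau
     = traj_prob T p1 P (\<lambda>_ _ _. 1) tau * (\<Prod>t<T. pol t (fst (tau ! t)) (snd (tau ! t)))"
  unfolding traj_prob_def by (simp add: mult_ac)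

lemma ln_traj_prob_ratio:
  assumes "traj_prob T p1 P pol tau \<noteq> 0" "\<forall>t<T. 0 < pic t (fst (tau ! t)) (snd (tau ! t))"
  shows "traj_prob T p1 P pic tau \<noteq> 0"
    and "ln (traj_prob T p1 P pic tau / traj_prob T p1 P pol tau)
           = (\<Sum>t<T. ln (pic t (fst (tau ! t)) (snd (tau ! t))))
             - (\<Sum>t<T. ln (pol t (fst (tau ! t)) (snd (tau ! t))))"
proof -
  have env_nz: "traj_prob T p1 P (\<lambda>_ _ _. 1) tau \<noteq> 0"
    and pol_nz: "\<forall>t<T. pol t (fst (tau ! t)) (snd (tau ! t)) \<noteq> 0"
    using assms(1) traj_prob_eq_mult_prod_policy[of T p1 P pol] by auto
  then show "traj_prob T p1 P pic tau \<noteq> 0"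
    using assms(2) traj_prob_eq_mult_prod_policy[of T p1 P pic] by fastforce
  have "traj_prob T p1 P pic tau / traj_prob T p1 P pol tau
      = (\<Prod>t<T. pic t (fst (tau ! t)) (snd (tau ! t))) / (\<Prod>t<T. pol t (fst (tau ! t)) (snd (tau ! t)))"
    using env_nz
    by (simp add: traj_prob_eq_mult_prod_policy[of T p1 P pic] traj_prob_eq_mult_prod_policy[of T p1 P pol])
  moreover have "ln (\<Prod>t<T. pic t (fst (tau ! t)) (snd (tau ! t)))
      = (\<Sum>t<T. ln (pic t (fst (tau ! t)) (snd (tau ! t))))"
    using assms(2) by (intro ln_prod) auto
  moreover have "ln (\<Prod>t<T. pol t (fst (tau ! t)) (snd (tau ! t)))
      = (\<Sum>t<T. ln (pol t (fst (tau ! t)) (snd (tau ! t))))"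
    using pol_nz by (intro ln_prod) auto
  ultimately show "ln (traj_prob T p1 P pic tau / traj_prob T p1 P pol tau)
      = (\<Sum>t<T. ln (pic t (fst (tau ! t)) (snd (tau ! t))))
        - (\<Sum>t<T. ln (pol t (fst (tau ! t)) (snd (tau ! t))))"
    using assms(2) pol_nz by (auto simp: ln_div)
qed

lemma maxent_term_log_reward:
  fixes pol pic :: "nat \<Rightarrow> 's \<Rightarrow> 'a::finite \<Rightarrow> real" and tau :: "('s \<times> 'a) list"
  assumes "\<forall>s. 0 \<le> p1 s" "\<forall>s a s'. 0 \<le> P s a s'" "pol \<in> policies T" "pic \<in> policies T"
  defines "q \<equiv> traj_prob T p1 P pol tau" and "c \<equiv> traj_prob T p1 P pic tau"
  shows "ereal q * (\<Sum>t<T. log_reward pic t (fst (tau ! t)) (snd (tau ! t)))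
           + ereal (q * - (\<Sum>t<T. ln (pol t (fst (tau ! t)) (snd (tau ! t)))))
         = (if q = 0 then 0 else if c = 0 then -\<infinity> else ereal (q * ln (c / q)))"
proof (cases "q = 0")
  case q_nz: False
  then have "0 < q"
    using traj_prob_nonneg[OF assms(1-3)] by (simp add: q_def order_less_le)
  show ?thesis
  proof (cases "\<forall>t<T. 0 < pic t (fst (tau ! t)) (snd (tau ! t))")
    case True
    then show ?thesis
      using ln_traj_prob_ratio[of T p1 P pol tau pic] q_nz
      by (simp add: q_def c_def log_reward_def right_diff_distrib)
  next
    case False
    then obtain t where t: "t < T" "\<not> 0 < pic t (fst (tau ! t)) (snd (tau ! t))"
      by blast
    moreover have "0 \<le> pic t (fst (tau ! t)) (snd (tau ! t))"
      using assms(4) t(1) by (simp add: policies_def)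
    ultimately have "pic t (fst (tau ! t)) (snd (tau ! t)) = 0"
      by simp
    then have "c = 0"
      using t unfolding c_def traj_prob_def by auto
    have "(\<Sum>t<T. log_reward pic t (fst (tau ! t)) (snd (tau ! t))) = -\<infinity>"
      by (rule sum_ereal_eq_MInfty[of _ t]) (use t in \<open>auto simp: log_reward_def\<close>)
    then show ?thesis
      using \<open>0 < q\<close> \<open>c = 0\<close> by simp
  qed
qed simp

lemma maxent_obj_log_reward:
  assumes "\<forall>s. 0 \<le> p1 s" "\<forall>s a s'. 0 \<le> P s a s'" "pol \<in> policies T" "pic \<in> policies T"
  shows "maxent_obj T p1 P pol (log_reward pic)
           = neg_rel_entropy (trajs T) (traj_prob T p1 P pol) (traj_prob T p1 P pic)"
proof -
  have "maxent_obj T p1 P pol (log_reward pic)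
      = (\<Sum>tau\<in>trajs T. ereal (traj_prob T p1 P pol tau)
            * (\<Sum>t<T. log_reward pic t (fst (tau ! t)) (snd (tau ! t)))
          + ereal (traj_prob T p1 P pol tau * - (\<Sum>t<T. ln (pol t (fst (tau ! t)) (snd (tau ! t))))))"
    unfolding maxent_obj_def cond_entropy_def
    by (simp add: sum.distrib sum_ereal[symmetric] del: sum_ereal)
  also have "\<dots> = neg_rel_entropy (trajs T) (traj_prob T p1 P pol) (traj_prob T p1 P pic)"
    unfolding neg_rel_entropy_def by (intro sum.cong refl maxent_term_log_reward[OF assms])
  finally show ?thesis .
qed

theorem lemma1:
  fixes T :: nat
    and p1 :: "'s::finite \<Rightarrow> real"
    and P :: "'s \<Rightarrow> 'a::finite \<Rightarrow> 's \<Rightarrow> real"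
    and p :: "('s \<times> 'a) list \<Rightarrow> real"
  assumes T: "1 \<le> T"
    and p1_nonneg: "\<forall>s. 0 \<le> p1 s" and p1_sum: "(\<Sum>s\<in>UNIV. p1 s) = 1"
    and P_nonneg: "\<forall>s a s'. 0 \<le> P s a s'" and P_sum: "\<forall>s a. (\<Sum>s'\<in>UNIV. P s a s') = 1"
    and p_nonneg: "\<forall>tau. 0 \<le> p tau"
    and p_supp: "\<forall>tau. tau \<notin> trajs T \<longrightarrow> p tau = 0"
    and p_sum: "(\<Sum>tau\<in>trajs T. p tau) = 1"
    and circ: "\<exists>pic \<in> policies T. \<forall>tau\<in>trajs T.
                 traj_prob T p1 P pic tau = sqrt (p tau) / (\<Sum>tau'\<in>trajs T. sqrt (p tau'))"
  shows "\<exists>r :: nat \<Rightarrow> 's \<Rightarrow> 'a \<Rightarrow> ereal. (\<forall>t s a. r t s a \<noteq> \<infinity>) \<and>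
           {pol \<in> policies T. \<forall>pol' \<in> policies T. regret T p1 P p pol \<le> regret T p1 P p pol'}
         = {pol \<in> policies T. \<forall>pol' \<in> policies T. maxent_obj T p1 P pol' r \<le> maxent_obj T p1 P pol r}"
proof -
  obtain pic where pic: "pic \<in> policies T"
    and pic_traj: "\<forall>tau\<in>trajs T. traj_prob T p1 P pic tau = sqrt (p tau) / (\<Sum>tau'\<in>trajs T. sqrt (p tau'))"
    using circ by blast
  let ?Q = "\<lambda>pol. \<forall>tau\<in>trajs T. traj_prob T p1 P pol tau = traj_prob T p1 P pic tau"
  have fin: "finite (trajs T :: ('s \<times> 'a) list set)"
    by (rule finite_trajs)
  have distr: "\<forall>tau\<in>trajs T. 0 \<le> traj_prob T p1 P pol tau" "sum (traj_prob T p1 P pol) (trajs T) = 1"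
    if "pol \<in> policies T" for pol
    using traj_prob_nonneg[OF p1_nonneg P_nonneg that] sum_traj_prob[OF _ p1_sum P_sum that] T by auto
  have "{pol \<in> policies T. \<forall>pol' \<in> policies T. regret T p1 P p pol \<le> regret T p1 P p pol'}
      = {pol \<in> policies T. ?Q pol}"
    unfolding regret_def support_ratio_sum_def[symmetric]
    using sqrt_sum_sq_le_support_ratio_sum[OF fin] support_ratio_sum_eq_sqrt_sum_sq_iff[OF fin]
      distr p_nonneg p_sum pic pic_traj
    by (intro minimizers_eq_of_attained_bound[where m = "ereal ((\<Sum>tau\<in>trajs T. sqrt (p tau))\<^sup>2)"]) auto
  moreover have "{pol \<in> policies T. \<forall>pol' \<in> policies T.
        maxent_obj T p1 P pol' (log_reward pic) \<le> maxent_obj T p1 P pol (log_reward pic)}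
      = {pol \<in> policies T. ?Q pol}"
    using maxent_obj_log_reward[OF p1_nonneg P_nonneg _ pic] neg_rel_entropy_le_0[OF fin]
      neg_rel_entropy_eq_0_iff[OF fin] distr pic
    by (intro maximizers_eq_of_attained_bound[where m = 0]) auto
  moreover have "\<forall>t s a. log_reward pic t s a \<noteq> \<infinity>"
    by (simp add: log_reward_def)
  ultimately show ?thesis
    by blast
qed

end
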